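(* Let $(\sigma_n)_{n\ge1}$ be positive measures on $[0,\infty[$ with $\int\frac{d\sigma_n(x)}{x+1}<\infty$, and let $\varphi_n(z)=\int_0^\infty\frac{d\sigma_n(x)}{x+z}$. Assume that $\varphi_n\to\varphi$ uniformly on compact subsets of the half-plane $\Re z>0$ for some holomorphic function $\varphi$ there. Then $\varphi$ is a Stieltjes transform, $\varphi(z)=a+\int_0^\infty\frac{d\sigma(x)}{x+z}$ with $a\ge0$ and $\sigma$ a positive measure with $\int\frac{d\sigma(x)}{x+1}<\infty$, one has $\sigma_n\to\sigma$ vaguely, and $\varphi_n\to\varphi$ uniformly on compact subsets of $\mathbb C\setminus]-\infty,0]$.
   Context: A Stieltjes transform is a function of the form $\varphi(z)=a+\int_{[0,\infty[}\frac{d\sigma(x)}{x+z}$, $z\in\mathbb C\setminus]-\infty,0]$, with $a\ge0$ and $\sigma$ a positive measure on $[0,\infty[$ with $\int\frac{d\sigma(x)}{x+1}<\infty$. Vague convergence means convergence of integrals of continuous compactly supported functions on $[0,\infty[$. *)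

theory Defs
  imports "HOL-Analysis.Analysis"
begin

definition pos_measure_halfline :: "real measure \<Rightarrow> bool" where
  "pos_measure_halfline \<sigma> \<longleftrightarrow> sets \<sigma> = sets (restrict_space borel {0..})"

definition stieltjes_admissible :: "real measure \<Rightarrow> bool" where
  "stieltjes_admissible \<sigma> \<longleftrightarrow> pos_measure_halfline \<sigma> \<and>
     (\<integral>\<^sup>+ x. ennreal (1 / (x + 1)) \<partial>\<sigma>) < \<infinity>"

definition stieltjes_int :: "real measure \<Rightarrow> complex \<Rightarrow> complex" where
  "stieltjes_int \<sigma> z = (\<integral> x. 1 / (complex_of_real x + z) \<partial>\<sigma>)"

definition cut_plane :: "complex set" where
  "cut_plane = UNIV - complex_of_real ` {..0}"

definition vague_convergence :: "(nat \<Rightarrow> real measure) \<Rightarrow> real measure \<Rightarrow> bool" where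
  "vague_convergence \<sigma>s \<sigma> \<longleftrightarrow>
     (\<forall>f :: real \<Rightarrow> real. continuous_on {0..} f \<and>
        (\<exists>K. compact K \<and> K \<subseteq> {0..} \<and> (\<forall>x \<in> {0..} - K. f x = 0)) \<longrightarrow>
        (\<lambda>n. \<integral> x. f x \<partial>\<sigma>s n) \<longlonglongrightarrow> (\<integral> x. f x \<partial>\<sigma>))"

end

theory Submission
  imports Defs "HOL-Probability.Probability"
begin

text \<open>The substitution t = x/(x+1) with weight 1/(x+1) turns \<sigma>_n into a finite measure
  \<tau>_n on [0,1] with \<phi>_n(z) = \<integral> d\<tau>_n(t)/(t + z(1-t)); the kernel is jointly continuous
  for z in the cut plane, and \<tau>_n has total mass \<phi>_n(1). By Helly's selection theorem a
  subsequence of \<tau>_n converges weakly to some \<tau>, so \<phi>(z) = \<integral> d\<tau>(t)/(t + z(1-t)) for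
  Re z > 0. Along the whole sequence the integrals of 1/(1+wt) = x/(t + x(1-t)), x = 1/(1+w), then
  converge for |w| < 1/2. Combined with lower powers these approximate t^k uniformly, so by
  induction all moments converge, and by Weierstrass all integrals of continuous functions on [0,1]:
  \<tau>_n converges weakly to \<tau>. Transforming back, the atom of \<tau> at 1 is the constant a
  and the rest of \<tau> is \<sigma>; vague convergence follows by testing with f(t/(1-t))/(1-t), and
  locally uniform convergence on the cut plane from the equicontinuity of the kernel.\<close>

section \<open>Continuous functions on the unit interval\<close>

lemma clamp01_in: "clamp 0 1 t \<in> {0..1::real}"
  using clamp_in_interval[of 0 1 t] by (simp add: cbox_interval)

lemma clamp01_cancel: "t \<in> {0..1::real} \<Longrightarrow> clamp 0 1 t = t"
  by (rule clamp_cancel_cbox) (simp add: cbox_interval)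

lemma borel_measurable_clamp01 [measurable]: "clamp (0::real) 1 \<in> borel_measurable borel"
  by (rule borel_measurable_continuous_onI) (rule clamp_continuous_on[where f = id, simplified])

lemma isCont_clamp01_comp:
  fixes f :: "real \<Rightarrow> 'b::metric_space"
  assumes "continuous_on {0..1} f"
  shows "isCont (\<lambda>t. f (clamp 0 1 t)) x"
  by (rule clamp_continuous_at) (simp add: cbox_interval assms)

lemma continuous_on_clamp01_comp:
  fixes f :: "real \<Rightarrow> 'b::metric_space"
  assumes "continuous_on {0..1} f"
  shows "continuous_on S (\<lambda>t. f (clamp 0 1 t))"
  by (rule clamp_continuous_on) (simp add: cbox_interval assms)

lemma borel_measurable_clamp01_comp:
  fixes f :: "real \<Rightarrow> 'b::metric_space"
  assumes "continuous_on {0..1} f"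
  shows "(\<lambda>t. f (clamp 0 1 t)) \<in> borel_measurable borel"
  by (rule borel_measurable_continuous_onI[OF continuous_on_clamp01_comp[OF assms]])

lemma bounded_clamp01_comp:
  fixes f :: "real \<Rightarrow> 'b::real_normed_vector"
  assumes "continuous_on {0..1} f"
  obtains C where "\<And>t. norm (f (clamp 0 1 t)) \<le> C"
proof -
  have "bounded (f ` {0..1})"
    by (rule compact_imp_bounded[OF compact_continuous_image[OF assms compact_Icc]])
  then obtain C where "\<forall>y\<in>f ` {0..1}. norm y \<le> C"
    by (auto simp: bounded_iff)
  then show ?thesis
    using that clamp01_in by blast
qed

lemma integrable_clamp01_comp:
  fixes f :: "real \<Rightarrow> 'b::{banach, second_countable_topology}"
  assumes "finite_measure L" "sets L = sets borel" "continuous_on {0..1} f"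
  shows "integrable L (\<lambda>t. f (clamp 0 1 t))"
proof -
  obtain C where "\<And>t. norm (f (clamp 0 1 t)) \<le> C"
    using bounded_clamp01_comp[OF assms(3)] by blast
  moreover have "(\<lambda>t. f (clamp 0 1 t)) \<in> borel_measurable L"
    using borel_measurable_clamp01_comp[OF assms(3)] measurable_cong_sets[OF assms(2) refl] by blast
  ultimately show ?thesis
    by (intro finite_measure.integrable_const_bound[OF assms(1), of _ C]) auto
qed

lemma norm_integral_clamp01_diff_le:
  fixes f g :: "real \<Rightarrow> 'b::{banach, second_countable_topology}"
  assumes L: "finite_measure L" "sets L = sets borel"
    and f: "continuous_on {0..1} f" and g: "continuous_on {0..1} g"
    and close: "\<And>t. t \<in> {0..1} \<Longrightarrow> norm (f t - g t) \<le> e"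
  shows "norm ((\<integral>t. f (clamp 0 1 t) \<partial>L) - (\<integral>t. g (clamp 0 1 t) \<partial>L)) \<le> e * measure L UNIV"
proof -
  note int = integrable_clamp01_comp[OF L]
  have "norm ((\<integral>t. f (clamp 0 1 t) \<partial>L) - (\<integral>t. g (clamp 0 1 t) \<partial>L))
      = norm (\<integral>t. f (clamp 0 1 t) - g (clamp 0 1 t) \<partial>L)"
    by (simp add: int[OF f] int[OF g])
  also have "\<dots> \<le> (\<integral>t. norm (f (clamp 0 1 t) - g (clamp 0 1 t)) \<partial>L)"
    by (rule integral_norm_bound)
  also have "\<dots> \<le> (\<integral>t. e \<partial>L)"
    using close clamp01_in
    by (intro integral_mono integrable_norm Bochner_Integration.integrable_diff int f g
        finite_measure.integrable_const[OF L(1)]) auto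
  also have "\<dots> = e * measure L UNIV"
    using sets_eq_imp_space_eq[OF L(2)] by simp
  finally show ?thesis .
qed

section \<open>Convergence of integrals against continuous functions on [0,1]\<close>

lemma norm_diff_triangle_ineq3:
  fixes a b c d :: "'a::real_normed_vector"
  shows "norm (a - b) \<le> norm (a - c) + norm (c - d) + norm (b - d)"
proof -
  have "a - b = (a - c) + (c - d) - (b - d)"
    by simp
  then show ?thesis
    by (metis norm_triangle_ineq norm_triangle_ineq4 order_trans add_right_mono)
qed

lemma tendsto_if_approximable:
  fixes a :: "nat \<Rightarrow> 'a::real_normed_vector"
  assumes approx: "\<And>e. e > 0 \<Longrightarrow>
    \<exists>b c. b \<longlonglongrightarrow> c \<and> (\<forall>n. norm (a n - b n) \<le> e) \<and> norm (l - c) \<le> e"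
  shows "a \<longlonglongrightarrow> l"
proof (rule LIMSEQ_I)
  fix r :: real assume "r > 0"
  then obtain b c where b: "b \<longlonglongrightarrow> c" and an: "\<And>n. norm (a n - b n) \<le> r / 4"
    and l: "norm (l - c) \<le> r / 4"
    using approx[of "r / 4"] by auto
  obtain n0 where n0: "\<And>n. n \<ge> n0 \<Longrightarrow> norm (b n - c) < r / 4"
    using LIMSEQ_D[OF b, of "r / 4"] \<open>r > 0\<close> by auto
  have "norm (a n - l) < r" if "n \<ge> n0" for n
    using norm_diff_triangle_ineq3[of "a n" l "b n" c] an[of n] l n0[OF that] \<open>r > 0\<close>
    by linarith
  then show "\<exists>no. \<forall>n\<ge>no. norm (a n - l) < r"
    by blast
qed

lemma power_div_resolvent_eq:
  fixes w t :: real
  assumes "w \<noteq> 0" "1 + w * t \<noteq> 0"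
  shows "t ^ k / (1 + w * t) = (1 / (1 + w * t) - (\<Sum>j<k. (-w) ^ j * t ^ j)) / (-w) ^ k"
proof -
  have "(\<Sum>j<k. (-w) ^ j * t ^ j) = (\<Sum>j<k. (-w * t) ^ j)"
    by (simp only: power_mult_distrib)
  also have "\<dots> = (1 - (-w * t) ^ k) / (1 + w * t)"
    using sum_gp_strict[of "-w * t" k] assms(2) by (simp add: add_eq_0_iff)
  finally have eq: "1 / (1 + w * t) - (\<Sum>j<k. (-w) ^ j * t ^ j) = (-w) ^ k * t ^ k / (1 + w * t)"
    by (simp add: diff_divide_distrib[symmetric]) (metis mult_minus_left power_mult_distrib)
  show ?thesis
    using assms(1) by (simp add: eq)
qed

lemma finite_net_parametrized_family:
  fixes F :: "'a::metric_space \<Rightarrow> real \<Rightarrow> 'b::real_normed_vector"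
  assumes K: "compact K" and cont: "continuous_on (K \<times> {0..1}) (\<lambda>(z, t). F z t)" and "e > 0"
  obtains C where "finite C" "C \<subseteq> K"
    "\<And>z. z \<in> K \<Longrightarrow> \<exists>c\<in>C. \<forall>t\<in>{0..1}. norm (F z t - F c t) \<le> e"
proof -
  obtain d where "d > 0" and d: "\<And>x x'. x \<in> K \<times> {0..1} \<Longrightarrow> x' \<in> K \<times> {0..1} \<Longrightarrow>
      dist x' x < d \<Longrightarrow> dist ((\<lambda>(z, t). F z t) x') ((\<lambda>(z, t). F z t) x) < e"
    using compact_uniformly_continuous[OF cont compact_Times[OF K compact_Icc]] \<open>e > 0\<close>
    unfolding uniformly_continuous_on_def by metis
  obtain C where C: "C \<subseteq> K" "finite C" "K \<subseteq> (\<Union>c\<in>C. ball c d)"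
    using compactE_image[OF K, of K "\<lambda>z. ball z d"] \<open>d > 0\<close> by force
  have "\<exists>c\<in>C. \<forall>t\<in>{0..1}. norm (F z t - F c t) \<le> e" if z: "z \<in> K" for z
  proof -
    obtain c where "c \<in> C" "dist c z < d"
      using C(3) z by (auto simp: dist_commute)
    moreover have "norm (F z t - F c t) \<le> e" if "t \<in> {0..1}" "c \<in> K" "dist c z < d" for t
      using d[of "(z, t)" "(c, t)"] that \<open>z \<in> K\<close>
      by (simp add: dist_Pair_Pair dist_norm norm_minus_commute)
    ultimately show ?thesis
      using C(1) by blast
  qed
  then show ?thesis
    using that C(1,2) by blast
qed

locale unit_interval_measures =
  fixes N :: "nat \<Rightarrow> real measure" and M :: "real measure"
  assumes finite_N: "\<And>n. finite_measure (N n)" and finite_M: "finite_measure M"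
    and sets_N: "\<And>n. sets (N n) = sets borel" and sets_M: "sets M = sets borel"
    and total_mass: "(\<lambda>n. measure (N n) UNIV) \<longlonglongrightarrow> measure M UNIV"
begin

text \<open>Test functions are composed with clamp 0 1: only their values on [0,1] matter,
  and a function continuous on [0,1] becomes bounded, continuous and measurable on the line.\<close>

definition integrals_converge :: "(real \<Rightarrow> 'b::{banach, second_countable_topology}) \<Rightarrow> bool" where
  "integrals_converge f \<longleftrightarrow>
     (\<lambda>n. \<integral>t. f (clamp 0 1 t) \<partial>N n) \<longlonglongrightarrow> (\<integral>t. f (clamp 0 1 t) \<partial>M)"

lemma total_mass_bound:
  obtains B where "B \<ge> 0" "\<And>n. measure (N n) UNIV \<le> B" "measure M UNIV \<le> B"
proof -
  obtain B where B: "\<And>n. norm (measure (N n) UNIV) \<le> B"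
    using BseqE[OF convergent_imp_Bseq[OF convergentI[OF total_mass]]] by blast
  have "measure M UNIV \<le> B"
    by (rule LIMSEQ_le_const2[OF total_mass]) (use B in auto)
  moreover have "B \<ge> 0"
    using B[of 0] norm_ge_zero order_trans by blast
  ultimately show ?thesis
    using that B by force
qed

lemma integrable_N:
  fixes f :: "real \<Rightarrow> 'b::{banach, second_countable_topology}"
  shows "continuous_on {0..1} f \<Longrightarrow> integrable (N n) (\<lambda>t. f (clamp 0 1 t))"
  by (rule integrable_clamp01_comp[OF finite_N sets_N])

lemma integrable_M:
  fixes f :: "real \<Rightarrow> 'b::{banach, second_countable_topology}"
  shows "continuous_on {0..1} f \<Longrightarrow> integrable M (\<lambda>t. f (clamp 0 1 t))"
  by (rule integrable_clamp01_comp[OF finite_M sets_M])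

lemma integrals_converge_add:
  fixes f g :: "real \<Rightarrow> 'b::{banach, second_countable_topology}"
  assumes "continuous_on {0..1} f" "continuous_on {0..1} g"
    and "integrals_converge f" "integrals_converge g"
  shows "integrals_converge (\<lambda>t. f t + g t)"
  using assms unfolding integrals_converge_def
  by (simp add: integrable_N integrable_M tendsto_add)

lemma integrals_converge_cmult:
  fixes f :: "real \<Rightarrow> real"
  shows "integrals_converge f \<Longrightarrow> integrals_converge (\<lambda>t. c * f t)"
  unfolding integrals_converge_def by (simp add: tendsto_mult_left)

lemma integrals_converge_sum:
  fixes f :: "'i \<Rightarrow> real \<Rightarrow> real"
  assumes "finite I" "\<And>i. i \<in> I \<Longrightarrow> continuous_on {0..1} (f i)"
    and "\<And>i. i \<in> I \<Longrightarrow> integrals_converge (f i)"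
  shows "integrals_converge (\<lambda>t. \<Sum>i\<in>I. f i t)"
  using assms
proof (induction I rule: finite_induct)
  case empty
  then show ?case
    by (simp add: integrals_converge_def)
next
  case (insert i I)
  then show ?case
    by (simp add: integrals_converge_add continuous_on_sum)
qed

lemma integrals_converge_cong:
  assumes "\<And>t. t \<in> {0..1} \<Longrightarrow> f t = g t"
  shows "integrals_converge f \<longleftrightarrow> integrals_converge g"
proof -
  have "(\<lambda>t. f (clamp 0 1 t)) = (\<lambda>t. g (clamp 0 1 t))"
    using assms clamp01_in by auto
  then show ?thesis
    by (simp add: integrals_converge_def)
qed

lemma integrals_converge_Re:
  fixes F :: "real \<Rightarrow> complex"
  assumes "continuous_on {0..1} F" "integrals_converge F"
  shows "integrals_converge (\<lambda>t. Re (F t))"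
  using assms(2) unfolding integrals_converge_def
  by (simp add: integral_Re integrable_N[OF assms(1)] integrable_M[OF assms(1)] tendsto_Re)

lemma integrals_converge_Re_Im:
  fixes F :: "real \<Rightarrow> complex"
  assumes "continuous_on {0..1} F"
    and "integrals_converge (\<lambda>t. Re (F t))" "integrals_converge (\<lambda>t. Im (F t))"
  shows "integrals_converge F"
  using assms(2,3) unfolding integrals_converge_def tendsto_complex_iff
  by (simp add: integral_Re integral_Im integrable_N[OF assms(1)] integrable_M[OF assms(1)])

lemma integrals_converge_uniform_approx:
  fixes h :: "real \<Rightarrow> 'b::{banach, second_countable_topology}"
  assumes h: "continuous_on {0..1} h"
    and approx: "\<And>e. e > 0 \<Longrightarrow> \<exists>g. continuous_on {0..1} g \<and> integrals_converge g \<and>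
                    (\<forall>t\<in>{0..1}. norm (h t - g t) \<le> e)"
  shows "integrals_converge h"
  unfolding integrals_converge_def
proof (rule tendsto_if_approximable)
  fix e :: real assume "e > 0"
  obtain B where B: "B \<ge> 0" "\<And>n. measure (N n) UNIV \<le> B" "measure M UNIV \<le> B"
    using total_mass_bound by metis
  have "e / (B + 1) > 0"
    using \<open>e > 0\<close> B(1) by simp
  then obtain g where g: "continuous_on {0..1} g" "integrals_converge g"
    and close: "\<forall>t\<in>{0..1}. norm (h t - g t) \<le> e / (B + 1)"
    using approx by blast
  have le: "e / (B + 1) * m \<le> e" if "m \<le> B" "m \<ge> 0" for m
  proof -
    have "e / (B + 1) * m \<le> e / (B + 1) * (B + 1)"
      using that \<open>e > 0\<close> B(1) by (intro mult_left_mono) auto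
    then show ?thesis
      using B(1) by simp
  qed
  have "norm ((\<integral>t. h (clamp 0 1 t) \<partial>N n) - (\<integral>t. g (clamp 0 1 t) \<partial>N n)) \<le> e" for n
    using norm_integral_clamp01_diff_le[OF finite_N sets_N h g(1)] close le[OF B(2)]
    by (meson measure_nonneg order_trans)
  moreover have "norm ((\<integral>t. h (clamp 0 1 t) \<partial>M) - (\<integral>t. g (clamp 0 1 t) \<partial>M)) \<le> e"
    using norm_integral_clamp01_diff_le[OF finite_M sets_M h g(1)] close le[OF B(3)]
    by (meson measure_nonneg order_trans)
  ultimately show "\<exists>b c. b \<longlonglongrightarrow> c \<and>
      (\<forall>n. norm ((\<integral>t. h (clamp 0 1 t) \<partial>N n) - b n) \<le> e) \<and>
      norm ((\<integral>t. h (clamp 0 1 t) \<partial>M) - c) \<le> e"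
    using g(2) unfolding integrals_converge_def by blast
qed

lemma uniform_limit_integrals:
  fixes F :: "'a::metric_space \<Rightarrow> real \<Rightarrow> 'b::{banach, second_countable_topology}"
  assumes K: "compact K" and cont: "continuous_on (K \<times> {0..1}) (\<lambda>(z, t). F z t)"
    and conv: "\<And>z. z \<in> K \<Longrightarrow> integrals_converge (F z)"
  shows "uniform_limit K (\<lambda>n z. \<integral>t. F z (clamp 0 1 t) \<partial>N n)
           (\<lambda>z. \<integral>t. F z (clamp 0 1 t) \<partial>M) sequentially"
  unfolding uniform_limit_iff
proof (intro allI impI)
  fix r :: real assume "r > 0"
  obtain B where B: "B \<ge> 0" "\<And>n. measure (N n) UNIV \<le> B" "measure M UNIV \<le> B"
    using total_mass_bound by metis
  define e where "e = r / (3 * (B + 1))"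
  have "e > 0"
    using \<open>r > 0\<close> B(1) by (simp add: e_def)
  have small: "e * m < r / 3" if "m \<le> B" for m
  proof -
    have "e * m \<le> e * B"
      using that \<open>e > 0\<close> by simp
    also have "\<dots> < r / 3"
      using \<open>r > 0\<close> B(1) by (simp add: e_def field_simps)
    finally show ?thesis .
  qed
  have F_cont: "continuous_on {0..1} (F z)" if "z \<in> K" for z
    by (rule continuous_on_compose2[OF cont, of _ "Pair z", simplified])
      (use that in \<open>auto intro: continuous_intros\<close>)
  obtain C where C: "finite C" "C \<subseteq> K"
    and net: "\<And>z. z \<in> K \<Longrightarrow> \<exists>c\<in>C. \<forall>t\<in>{0..1}. norm (F z t - F c t) \<le> e"
    using finite_net_parametrized_family[OF K cont \<open>e > 0\<close>] by blast
  have "\<forall>\<^sub>F n in sequentially. \<forall>c\<in>C.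
      dist (\<integral>t. F c (clamp 0 1 t) \<partial>N n) (\<integral>t. F c (clamp 0 1 t) \<partial>M) < r / 3"
    using conv C(2) \<open>r > 0\<close> unfolding integrals_converge_def
    by (intro eventually_ball_finite[OF C(1)] ballI tendstoD) auto
  then show "\<forall>\<^sub>F n in sequentially. \<forall>z\<in>K.
      dist (\<integral>t. F z (clamp 0 1 t) \<partial>N n) (\<integral>t. F z (clamp 0 1 t) \<partial>M) < r"
  proof (rule eventually_mono, intro ballI)
    fix n z assume conv_C: "\<forall>c\<in>C.
        dist (\<integral>t. F c (clamp 0 1 t) \<partial>N n) (\<integral>t. F c (clamp 0 1 t) \<partial>M) < r / 3"
      and "z \<in> K"
    then obtain c where c: "c \<in> C" "\<forall>t\<in>{0..1}. norm (F z t - F c t) \<le> e"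
      using net by blast
    then have "c \<in> K"
      using C(2) by blast
    have "norm ((\<integral>t. F z (clamp 0 1 t) \<partial>N n) - (\<integral>t. F c (clamp 0 1 t) \<partial>N n))
        \<le> e * measure (N n) UNIV"
      by (rule norm_integral_clamp01_diff_le[OF finite_N sets_N F_cont F_cont])
        (use c(2) \<open>z \<in> K\<close> \<open>c \<in> K\<close> in auto)
    then have "norm ((\<integral>t. F z (clamp 0 1 t) \<partial>N n) - (\<integral>t. F c (clamp 0 1 t) \<partial>N n)) < r / 3"
      using small[OF B(2)[of n]] by linarith
    moreover have "norm ((\<integral>t. F z (clamp 0 1 t) \<partial>M) - (\<integral>t. F c (clamp 0 1 t) \<partial>M))
        \<le> e * measure M UNIV"
      by (rule norm_integral_clamp01_diff_le[OF finite_M sets_M F_cont F_cont])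
        (use c(2) \<open>z \<in> K\<close> \<open>c \<in> K\<close> in auto)
    then have "norm ((\<integral>t. F z (clamp 0 1 t) \<partial>M) - (\<integral>t. F c (clamp 0 1 t) \<partial>M)) < r / 3"
      using small[OF B(3)] by linarith
    moreover have "norm ((\<integral>t. F c (clamp 0 1 t) \<partial>N n) - (\<integral>t. F c (clamp 0 1 t) \<partial>M)) < r / 3"
      using conv_C c(1) by (simp add: dist_norm)
    ultimately show "dist (\<integral>t. F z (clamp 0 1 t) \<partial>N n) (\<integral>t. F z (clamp 0 1 t) \<partial>M) < r"
      using norm_diff_triangle_ineq3[of "\<integral>t. F z (clamp 0 1 t) \<partial>N n" "\<integral>t. F z (clamp 0 1 t) \<partial>M"
          "\<integral>t. F c (clamp 0 1 t) \<partial>N n" "\<integral>t. F c (clamp 0 1 t) \<partial>M"]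
      unfolding dist_norm by linarith
  qed
qed

context
  assumes resolvent: "\<And>w::real. \<bar>w\<bar> < 1/2 \<Longrightarrow> integrals_converge (\<lambda>t. 1 / (1 + w * t))"
begin

lemma integrals_converge_power: "integrals_converge (\<lambda>t::real. t ^ k)"
proof (induction k rule: less_induct)
  case (less k)
  show ?case
  proof (rule integrals_converge_uniform_approx)
    fix e :: real assume "e > 0"
    define w where "w = min (1/4) e"
    have w: "0 < w" "w \<le> e" "\<bar>w\<bar> < 1/2"
      using \<open>e > 0\<close> by (auto simp: w_def)
    have pos: "1 + w * t > 0" if "t \<in> {0..1}" for t
      using w that by (simp add: add_pos_nonneg)
    define c where "c = 1 / (-w) ^ k"
    define g where "g t = c * (1 / (1 + w * t)) + (\<Sum>j<k. (- c * (-w) ^ j) * t ^ j)" for t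
    have resolvent_cont: "continuous_on {0..1} (\<lambda>t. 1 / (1 + w * t))"
      using pos by (intro continuous_intros) (auto simp: less_le)
    have "continuous_on {0..1} g"
      unfolding g_def by (intro continuous_intros resolvent_cont)
    moreover have "integrals_converge g"
      unfolding g_def
      by (intro integrals_converge_add integrals_converge_sum integrals_converge_cmult
          resolvent[OF w(3)] less.IH resolvent_cont continuous_intros) auto
    moreover have "norm (t ^ k - g t) \<le> e" if t: "t \<in> {0..1}" for t
    proof -
      have "(\<Sum>j<k. (- c * (-w) ^ j) * t ^ j) = - (c * (\<Sum>j<k. (-w) ^ j * t ^ j))"
        by (simp add: sum_distrib_left sum_negf[symmetric] mult.assoc)
      then have "g t = (1 / (1 + w * t) - (\<Sum>j<k. (-w) ^ j * t ^ j)) / (-w) ^ k"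
        by (simp add: g_def c_def diff_divide_distrib)
      also have "\<dots> = t ^ k / (1 + w * t)"
        using power_div_resolvent_eq[of w t k] pos[OF t] w(1) by simp
      finally have "g t = t ^ k / (1 + w * t)" .
      then have err: "t ^ k - g t = t ^ k * (w * t) / (1 + w * t)"
        using pos[OF t] by (simp add: field_simps)
      have nonneg: "0 \<le> t ^ k * (w * t) / (1 + w * t)"
        using t w(1) pos[OF t] by simp
      have "t ^ k * (w * t) / (1 + w * t) \<le> w"
      proof -
        have "t ^ k * (w * t) \<le> 1 * (w * t)"
          using t w(1) by (intro mult_right_mono power_le_one) auto
        also have "\<dots> \<le> w"
          using t w(1) by (simp add: mult_left_le)
        finally have "t ^ k * (w * t) / (1 + w * t) \<le> w / 1"
          using t w(1) by (intro frac_le) auto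
        then show ?thesis
          by simp
      qed
      then show ?thesis
        using w(2) by (simp only: err real_norm_def abs_of_nonneg[OF nonneg])
    qed
    ultimately show "\<exists>g. continuous_on {0..1} g \<and> integrals_converge g \<and>
        (\<forall>t\<in>{0..1}. norm (t ^ k - g t) \<le> e)"
      by blast
  qed (intro continuous_intros)
qed

lemma integrals_converge_continuous:
  fixes f :: "real \<Rightarrow> real"
  assumes "continuous_on {0..1} f"
  shows "integrals_converge f"
proof (rule integrals_converge_uniform_approx[OF assms])
  fix e :: real assume "e > 0"
  then obtain p where p: "real_polynomial_function p" "\<And>t. t \<in> {0..1} \<Longrightarrow> \<bar>f t - p t\<bar> < e"
    using Stone_Weierstrass_real_polynomial_function[OF compact_Icc assms] by blast
  obtain a n where "p = (\<lambda>t. \<Sum>i\<le>n. a i * t ^ i)"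
    using real_polynomial_function_imp_sum[OF p(1)] by blast
  then have "integrals_converge p"
    by (simp add: integrals_converge_sum integrals_converge_cmult integrals_converge_power
        continuous_intros)
  moreover have "continuous_on {0..1} p"
    using p(1) continuous_real_polymonial_function continuous_at_imp_continuous_on by blast
  ultimately show "\<exists>g. continuous_on {0..1} g \<and> integrals_converge g \<and>
      (\<forall>t\<in>{0..1}. norm (f t - g t) \<le> e)"
    using p(2) by (auto intro!: exI[of _ p] less_imp_le)
qed

lemma integrals_converge_continuous_complex:
  fixes F :: "real \<Rightarrow> complex"
  assumes "continuous_on {0..1} F"
  shows "integrals_converge F"
  using assms
  by (intro integrals_converge_Re_Im integrals_converge_continuous continuous_intros)

end

end

section \<open>The Stieltjes kernel on the unit interval\<close>

definition stieltjes_kernel :: "complex \<Rightarrow> real \<Rightarrow> complex" where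
  "stieltjes_kernel z t = 1 / (complex_of_real t + z * (1 - complex_of_real t))"

lemma stieltjes_kernel_right_one [simp]: "stieltjes_kernel z 1 = 1"
  by (simp add: stieltjes_kernel_def)

lemma stieltjes_kernel_left_one [simp]: "stieltjes_kernel 1 t = 1"
  by (simp add: stieltjes_kernel_def)

lemma stieltjes_kernel_denominator_nonzero:
  assumes z: "z \<in> cut_plane" and t: "t \<in> {0..1}"
  shows "complex_of_real t + z * (1 - complex_of_real t) \<noteq> 0"
proof
  assume eq: "complex_of_real t + z * (1 - complex_of_real t) = 0"
  then have "t \<noteq> 1"
    by auto
  then have nz: "1 - complex_of_real t \<noteq> 0"
    by (metis eq_iff_diff_eq_0 of_real_eq_1_iff)
  have "z * (1 - complex_of_real t) = - complex_of_real t"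
    using eq add_eq_0_iff[of "complex_of_real t" "z * (1 - complex_of_real t)"] by simp
  then have "z = - complex_of_real t / (1 - complex_of_real t)"
    using nz by (metis nonzero_mult_div_cancel_right)
  then have "z = complex_of_real (- t / (1 - t))"
    by simp
  moreover have "- t / (1 - t) \<in> {..0}"
    using t \<open>t \<noteq> 1\<close> by auto
  ultimately have "z \<in> complex_of_real ` {..0}"
    by blast
  then show False
    using z by (simp add: cut_plane_def)
qed

lemma continuous_on_stieltjes_kernel:
  assumes "K \<subseteq> cut_plane"
  shows "continuous_on (K \<times> {0..1}) (\<lambda>(z, t). stieltjes_kernel z t)"
  unfolding stieltjes_kernel_def case_prod_unfold
  using stieltjes_kernel_denominator_nonzero assms
  by (intro continuous_intros) (auto simp: mem_Times_iff)

lemma continuous_on_stieltjes_kernel_right: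
  assumes "z \<in> cut_plane"
  shows "continuous_on {0..1} (stieltjes_kernel z)"
  unfolding stieltjes_kernel_def
  using stieltjes_kernel_denominator_nonzero[OF assms]
  by (intro continuous_intros) auto

lemma stieltjes_kernel_of_halfline:
  fixes x :: real
  assumes "x \<ge> 0"
  shows "(1 / (x + 1)) *\<^sub>R stieltjes_kernel z (x / (x + 1)) = 1 / (complex_of_real x + z)"
proof -
  define X where "X = complex_of_real x"
  have "X + 1 = complex_of_real (x + 1)"
    by (simp add: X_def)
  then have X1: "X + 1 \<noteq> 0"
    using assms by (simp only: of_real_eq_0_iff)
  have "1 - X / (X + 1) = 1 / (X + 1)"
    using X1 by (simp add: field_simps)
  then have "X / (X + 1) + z * (1 - X / (X + 1)) = (X + z) / (X + 1)"
    by (simp add: add_divide_distrib)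
  moreover have "complex_of_real (x / (x + 1)) = X / (X + 1)"
    by (simp add: X_def)
  ultimately have "stieltjes_kernel z (x / (x + 1)) = (X + 1) / (X + z)"
    by (simp add: stieltjes_kernel_def)
  then show ?thesis
    using X1 by (simp add: scaleR_conv_of_real X_def)
qed

lemma stieltjes_kernel_of_unit:
  fixes t :: real
  assumes "t < 1"
  shows "(1 / (1 - t)) *\<^sub>R (1 / (complex_of_real (t / (1 - t)) + z)) = stieltjes_kernel z t"
proof -
  define T where "T = complex_of_real t"
  have "1 - T = complex_of_real (1 - t)"
    by (simp add: T_def)
  then have T1: "1 - T \<noteq> 0"
    using assms by (simp only: of_real_eq_0_iff)
  have "complex_of_real (t / (1 - t)) = T / (1 - T)"
    by (simp add: T_def)
  moreover have "T / (1 - T) + z = (T + z * (1 - T)) / (1 - T)"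
    using T1 by (simp add: field_simps)
  ultimately show ?thesis
    using T1 by (simp add: stieltjes_kernel_def scaleR_conv_of_real T_def)
qed

section \<open>Transfer between the half-line and the unit interval\<close>

lemma space_pos_measure_halfline: "pos_measure_halfline \<sigma> \<Longrightarrow> space \<sigma> = {0..}"
  unfolding pos_measure_halfline_def
  by (drule sets_eq_imp_space_eq) (simp add: space_restrict_space)

lemma borel_measurable_pos_measure_halfline:
  fixes f :: "real \<Rightarrow> 'b::topological_space"
  assumes "pos_measure_halfline \<sigma>" "f \<in> borel_measurable borel"
  shows "f \<in> borel_measurable \<sigma>"
  using measurable_restrict_space1[OF assms(2), of "{0..}"]
    measurable_cong_sets[OF assms(1)[unfolded pos_measure_halfline_def] refl]
  by blast

definition unit_transfer :: "real measure \<Rightarrow> real measure" where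
  "unit_transfer \<sigma> = distr (density \<sigma> (\<lambda>x. ennreal (1 / (x + 1)))) borel (\<lambda>x. x / (x + 1))"

lemma sets_unit_transfer [simp]: "sets (unit_transfer \<sigma>) = sets borel"
  by (simp add: unit_transfer_def)

lemma space_unit_transfer [simp]: "space (unit_transfer \<sigma>) = UNIV"
  by (simp add: unit_transfer_def)

lemma measurable_to_unit:
  assumes "pos_measure_halfline \<sigma>"
  shows "(\<lambda>x::real. x / (x + 1)) \<in> measurable (density \<sigma> (\<lambda>x. ennreal (1 / (x + 1)))) borel"
proof -
  have "(\<lambda>x::real. x / (x + 1)) \<in> borel_measurable \<sigma>"
    by (rule borel_measurable_pos_measure_halfline[OF assms]) measurable
  then show ?thesis
    by simp
qed

lemma integral_unit_transfer:
  fixes f :: "real \<Rightarrow> 'b::{banach, second_countable_topology}"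
  assumes \<sigma>: "pos_measure_halfline \<sigma>" and f: "f \<in> borel_measurable borel"
  shows "(\<integral>t. f t \<partial>unit_transfer \<sigma>) = (\<integral>x. (1 / (x + 1)) *\<^sub>R f (x / (x + 1)) \<partial>\<sigma>)"
proof -
  have "(\<integral>t. f t \<partial>unit_transfer \<sigma>) = (\<integral>x. f (x / (x + 1)) \<partial>density \<sigma> (\<lambda>x. ennreal (1 / (x + 1))))"
    unfolding unit_transfer_def by (rule integral_distr[OF measurable_to_unit[OF \<sigma>] f])
  also have "\<dots> = (\<integral>x. (1 / (x + 1)) *\<^sub>R f (x / (x + 1)) \<partial>\<sigma>)"
    using f space_pos_measure_halfline[OF \<sigma>]
    by (intro integral_density borel_measurable_pos_measure_halfline[OF \<sigma>] AE_I2) auto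
  finally show ?thesis .
qed

lemma finite_measure_unit_transfer:
  assumes "stieltjes_admissible \<sigma>"
  shows "finite_measure (unit_transfer \<sigma>)"
proof -
  have \<sigma>: "pos_measure_halfline \<sigma>"
    using assms by (simp add: stieltjes_admissible_def)
  have "emeasure (unit_transfer \<sigma>) UNIV = emeasure (density \<sigma> (\<lambda>x. ennreal (1 / (x + 1)))) (space \<sigma>)"
    unfolding unit_transfer_def by (subst emeasure_distr[OF measurable_to_unit[OF \<sigma>]]) auto
  also have "\<dots> = (\<integral>\<^sup>+ x. ennreal (1 / (x + 1)) * indicator (space \<sigma>) x \<partial>\<sigma>)"
    by (rule emeasure_density) (auto intro: borel_measurable_pos_measure_halfline[OF \<sigma>])
  also have "\<dots> = (\<integral>\<^sup>+ x. ennreal (1 / (x + 1)) \<partial>\<sigma>)"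
    by (intro nn_integral_cong) simp
  finally have "emeasure (unit_transfer \<sigma>) (space (unit_transfer \<sigma>)) \<noteq> \<infinity>"
    using assms unfolding stieltjes_admissible_def by (metis space_unit_transfer less_imp_neq)
  then show ?thesis
    by (rule finite_measureI)
qed

lemma AE_unit_transfer:
  assumes \<sigma>: "pos_measure_halfline \<sigma>"
  shows "AE t in unit_transfer \<sigma>. t \<in> {0..1}"
proof -
  have "AE x in density \<sigma> (\<lambda>x. ennreal (1 / (x + 1))). x / (x + 1) \<in> {0..1}"
    using space_pos_measure_halfline[OF \<sigma>] by (intro AE_I2) auto
  then show ?thesis
    unfolding unit_transfer_def by (subst AE_distr_iff[OF measurable_to_unit[OF \<sigma>]]) simp_all
qed

lemma stieltjes_int_unit_transfer:
  assumes \<sigma>: "pos_measure_halfline \<sigma>"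
  shows "stieltjes_int \<sigma> z = (\<integral>t. stieltjes_kernel z (clamp 0 1 t) \<partial>unit_transfer \<sigma>)"
proof -
  have "(\<integral>t. stieltjes_kernel z (clamp 0 1 t) \<partial>unit_transfer \<sigma>)
      = (\<integral>x. (1 / (x + 1)) *\<^sub>R stieltjes_kernel z (clamp 0 1 (x / (x + 1))) \<partial>\<sigma>)"
    by (rule integral_unit_transfer[OF \<sigma>]) (unfold stieltjes_kernel_def, measurable)
  also have "\<dots> = stieltjes_int \<sigma> z"
    unfolding stieltjes_int_def
    using space_pos_measure_halfline[OF \<sigma>]
    by (intro Bochner_Integration.integral_cong)
      (auto simp: clamp01_cancel stieltjes_kernel_of_halfline)
  finally show ?thesis ..
qed

definition halfline_transfer :: "real measure \<Rightarrow> real measure" where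
  "halfline_transfer \<nu> = density (distr (restrict_space \<nu> {0..<1}) (restrict_space borel {0..})
     (\<lambda>t. t / (1 - t))) (\<lambda>x. ennreal (x + 1))"

lemma sets_halfline_transfer [simp]:
  "sets (halfline_transfer \<nu>) = sets (restrict_space borel {0..})"
  by (simp add: halfline_transfer_def)

lemma measurable_to_halfline:
  assumes "sets \<nu> = sets borel"
  shows "(\<lambda>t::real. t / (1 - t)) \<in> measurable (restrict_space \<nu> {0..<1}) (restrict_space borel {0..})"
proof (rule measurable_restrict_space2)
  show "(\<lambda>t::real. t / (1 - t)) \<in> space (restrict_space \<nu> {0..<1}) \<rightarrow> {0..}"
    using sets_eq_imp_space_eq[OF assms] by (auto simp: space_restrict_space)
  show "(\<lambda>t::real. t / (1 - t)) \<in> borel_measurable (restrict_space \<nu> {0..<1})"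
    by (rule measurable_restrict_space1) (simp add: measurable_cong_sets[OF assms refl])
qed

lemma stieltjes_admissible_halfline_transfer:
  assumes sets: "sets \<nu> = sets borel" and fin: "finite_measure \<nu>"
  shows "stieltjes_admissible (halfline_transfer \<nu>)"
proof -
  let ?R = "distr (restrict_space \<nu> {0..<1}) (restrict_space borel {0..}) (\<lambda>t::real. t / (1 - t))"
  have meas: "f \<in> borel_measurable ?R" if "f \<in> borel_measurable borel" for f :: "real \<Rightarrow> ennreal"
    using measurable_restrict_space1[OF that] by simp
  have "finite_measure (restrict_space \<nu> {0..<1})"
    using fin sets by (intro finite_measure_restrict_space) auto
  then have "finite_measure ?R"
    by (rule finite_measure.finite_measure_distr[OF _ measurable_to_halfline[OF sets]])
  have "(\<integral>\<^sup>+ x. ennreal (1 / (x + 1)) \<partial>halfline_transfer \<nu>)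
      = (\<integral>\<^sup>+ x. ennreal (x + 1) * ennreal (1 / (x + 1)) \<partial>?R)"
    unfolding halfline_transfer_def by (intro nn_integral_density meas) auto
  also have "\<dots> = (\<integral>\<^sup>+ x. 1 \<partial>?R)"
  proof (rule nn_integral_cong)
    fix x assume "x \<in> space ?R"
    then have "x \<ge> 0"
      by (simp add: space_restrict_space)
    then show "ennreal (x + 1) * ennreal (1 / (x + 1)) = 1"
      by (simp add: ennreal_mult[symmetric] del: ennreal_plus)
  qed
  also have "\<dots> < \<infinity>"
    using finite_measure.emeasure_finite[OF \<open>finite_measure ?R\<close>] by (simp add: less_top)
  finally show ?thesis
    by (simp add: stieltjes_admissible_def pos_measure_halfline_def)
qed

lemma integral_halfline_transfer:
  fixes F :: "real \<Rightarrow> 'b::{banach, second_countable_topology}"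
  assumes sets: "sets \<nu> = sets borel" and F: "F \<in> borel_measurable (restrict_space borel {0..})"
  shows "(\<integral>x. F x \<partial>halfline_transfer \<nu>)
      = (\<integral>t. indicator {0..<1} t *\<^sub>R ((1 / (1 - t)) *\<^sub>R F (t / (1 - t))) \<partial>\<nu>)"
proof -
  have plus1: "(\<lambda>x::real. x + 1) \<in> borel_measurable (restrict_space borel {0..})"
    by (intro measurable_restrict_space1) simp
  have "(\<integral>x. F x \<partial>halfline_transfer \<nu>)
      = (\<integral>x. (x + 1) *\<^sub>R F x \<partial>distr (restrict_space \<nu> {0..<1}) (restrict_space borel {0..}) (\<lambda>t. t / (1 - t)))"
    unfolding halfline_transfer_def using F plus1 by (intro integral_density AE_I2) (auto simp: space_restrict_space)
  also have "\<dots> = (\<integral>t. (t / (1 - t) + 1) *\<^sub>R F (t / (1 - t)) \<partial>restrict_space \<nu> {0..<1})"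
    by (intro integral_distr[OF measurable_to_halfline[OF sets]] borel_measurable_scaleR plus1 F)
  also have "\<dots> = (\<integral>t. indicator {0..<1} t *\<^sub>R ((t / (1 - t) + 1) *\<^sub>R F (t / (1 - t))) \<partial>\<nu>)"
    by (rule integral_restrict_space) (simp add: sets)
  also have "\<dots> = (\<integral>t. indicator {0..<1} t *\<^sub>R ((1 / (1 - t)) *\<^sub>R F (t / (1 - t))) \<partial>\<nu>)"
  proof (intro Bochner_Integration.integral_cong refl)
    fix t :: real
    have "t < 1 \<Longrightarrow> t / (1 - t) + 1 = 1 / (1 - t)"
      by (simp add: field_simps)
    then show "indicator {0..<1} t *\<^sub>R ((t / (1 - t) + 1) *\<^sub>R F (t / (1 - t)))
        = indicator {0..<1} t *\<^sub>R ((1 / (1 - t)) *\<^sub>R F (t / (1 - t)))"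
      by (cases "t \<in> {0..<1}") simp_all
  qed
  finally show ?thesis .
qed

lemma integral_stieltjes_kernel_split:
  assumes sets: "sets \<nu> = sets borel" and fin: "finite_measure \<nu>"
    and supp: "AE t in \<nu>. t \<in> {0..1}" and z: "z \<in> cut_plane"
  shows "(\<integral>t. stieltjes_kernel z (clamp 0 1 t) \<partial>\<nu>)
      = complex_of_real (measure \<nu> {1}) + stieltjes_int (halfline_transfer \<nu>) z"
proof -
  have kernel: "integrable \<nu> (\<lambda>t. stieltjes_kernel z (clamp 0 1 t))"
    by (rule integrable_clamp01_comp[OF fin sets continuous_on_stieltjes_kernel_right[OF z]])
  have atom: "integrable \<nu> (\<lambda>t. indicator {1} t *\<^sub>R (1::complex))"
    by (intro integrable_mult_indicator finite_measure.integrable_const[OF fin]) (simp add: sets)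
  have "(\<integral>t. stieltjes_kernel z (clamp 0 1 t) \<partial>\<nu>)
      = (\<integral>t. indicator {0..<1} t *\<^sub>R stieltjes_kernel z (clamp 0 1 t) + indicator {1} t *\<^sub>R 1 \<partial>\<nu>)"
  proof (rule integral_cong_AE)
    show "AE t in \<nu>. stieltjes_kernel z (clamp 0 1 t)
        = indicator {0..<1} t *\<^sub>R stieltjes_kernel z (clamp 0 1 t) + indicator {1} t *\<^sub>R 1"
      using supp by eventually_elim (auto simp: indicator_def clamp01_cancel)
  qed (unfold measurable_cong_sets[OF sets refl] stieltjes_kernel_def; measurable)+
  also have "\<dots> = (\<integral>t. indicator {0..<1} t *\<^sub>R stieltjes_kernel z (clamp 0 1 t) \<partial>\<nu>)
      + (\<integral>t. indicator {1} t *\<^sub>R 1 \<partial>\<nu>)"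
    by (rule Bochner_Integration.integral_add[OF integrable_mult_indicator[OF _ kernel] atom])
      (simp add: sets)
  also have "(\<integral>t. indicator {1} t *\<^sub>R (1::complex) \<partial>\<nu>) = complex_of_real (measure \<nu> {1})"
    using sets_eq_imp_space_eq[OF sets] by (simp add: scaleR_conv_of_real)
  also have "(\<integral>t. indicator {0..<1} t *\<^sub>R stieltjes_kernel z (clamp 0 1 t) \<partial>\<nu>)
      = stieltjes_int (halfline_transfer \<nu>) z"
    unfolding stieltjes_int_def
    by (subst integral_halfline_transfer[OF sets])
      (auto intro!: measurable_restrict_space1 Bochner_Integration.integral_cong
        simp: indicator_def clamp01_cancel stieltjes_kernel_of_unit[symmetric])
  finally show ?thesis
    by simp
qed

definition halfline_test :: "(real \<Rightarrow> real) \<Rightarrow> real \<Rightarrow> real" where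
  "halfline_test f t = (if t < 1 then f (t / (1 - t)) / (1 - t) else 0)"

lemma continuous_on_halfline_test:
  assumes f: "continuous_on {0..} f" and K: "compact K" "K \<subseteq> {0..}"
    and supp: "\<forall>x\<in>{0..} - K. f x = 0"
  shows "continuous_on {0..1} (halfline_test f)"
proof -
  obtain R where R: "R \<ge> 0" "\<And>x. x \<in> K \<Longrightarrow> x \<le> R"
    using compact_imp_bounded[OF K(1)] bounded_real by (metis abs_le_D1 abs_ge_zero order_trans)
  define c where "c = (R + 1) / (R + 2)"
  have c: "0 \<le> c" "c < 1" "c / (1 - c) = R + 1"
    using R(1) by (auto simp: c_def field_simps)
  have vanish: "halfline_test f t = 0" if "t \<in> {c..1}" for t
  proof (cases "t < 1")
    case True
    have "c / (1 - c) \<le> t / (1 - t)"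
      using that True c by (intro frac_le) auto
    then have "t / (1 - t) \<in> {0..} - K"
      using R(2) c that by force
    then show ?thesis
      using supp True by (simp add: halfline_test_def)
  qed (simp add: halfline_test_def)
  have "continuous_on {0..c} (\<lambda>t. f (t / (1 - t)) / (1 - t))"
    using c by (intro continuous_intros continuous_on_compose2[OF f]) auto
  then have "continuous_on {0..c} (halfline_test f)"
    by (rule continuous_on_eq) (use c in \<open>auto simp: halfline_test_def\<close>)
  moreover have "continuous_on {c..1} (halfline_test f)"
    by (rule continuous_on_eq[OF continuous_on_const[of _ 0]]) (simp add: vanish)
  ultimately have "continuous_on ({0..c} \<union> {c..1}) (halfline_test f)"
    by (intro continuous_on_closed_Un) auto
  moreover have "{0..c} \<union> {c..1} = {0..1::real}"
    using c by auto
  ultimately show ?thesis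
    by simp
qed

lemma integral_halfline_test_unit_transfer:
  assumes \<sigma>: "pos_measure_halfline \<sigma>" and h: "continuous_on {0..1} (halfline_test f)"
  shows "(\<integral>t. halfline_test f (clamp 0 1 t) \<partial>unit_transfer \<sigma>) = (\<integral>x. f x \<partial>\<sigma>)"
proof -
  have "(\<integral>t. halfline_test f (clamp 0 1 t) \<partial>unit_transfer \<sigma>)
      = (\<integral>x. (1 / (x + 1)) *\<^sub>R halfline_test f (clamp 0 1 (x / (x + 1))) \<partial>\<sigma>)"
    by (rule integral_unit_transfer[OF \<sigma> borel_measurable_clamp01_comp[OF h]])
  also have "\<dots> = (\<integral>x. f x \<partial>\<sigma>)"
  proof (intro Bochner_Integration.integral_cong refl)
    fix x assume "x \<in> space \<sigma>"
    then have "x \<ge> 0"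
      using space_pos_measure_halfline[OF \<sigma>] by auto
    moreover have "1 - x / (x + 1) = 1 / (x + 1)" "x / (x + 1) / (1 / (x + 1)) = x"
      using \<open>x \<ge> 0\<close> by (simp_all add: field_simps)
    ultimately show "(1 / (x + 1)) *\<^sub>R halfline_test f (clamp 0 1 (x / (x + 1))) = f x"
      by (simp add: clamp01_cancel halfline_test_def)
  qed
  finally show ?thesis .
qed

lemma integral_halfline_test_halfline_transfer:
  assumes sets: "sets \<nu> = sets borel" and supp: "AE t in \<nu>. t \<in> {0..1}"
    and f: "f \<in> borel_measurable borel" and h: "continuous_on {0..1} (halfline_test f)"
  shows "(\<integral>t. halfline_test f (clamp 0 1 t) \<partial>\<nu>) = (\<integral>x. f x \<partial>halfline_transfer \<nu>)"
proof -
  have "(\<integral>x. f x \<partial>halfline_transfer \<nu>)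
      = (\<integral>t. indicator {0..<1} t *\<^sub>R ((1 / (1 - t)) *\<^sub>R f (t / (1 - t))) \<partial>\<nu>)"
    by (rule integral_halfline_transfer[OF sets measurable_restrict_space1[OF f]])
  also have "\<dots> = (\<integral>t. halfline_test f (clamp 0 1 t) \<partial>\<nu>)"
  proof (rule integral_cong_AE)
    show "(\<lambda>t. indicator {0..<1} t *\<^sub>R ((1 / (1 - t)) *\<^sub>R f (t / (1 - t)))) \<in> borel_measurable \<nu>"
      using f by (simp add: measurable_cong_sets[OF sets refl])
    show "(\<lambda>t. halfline_test f (clamp 0 1 t)) \<in> borel_measurable \<nu>"
      using borel_measurable_clamp01_comp[OF h] by (simp add: measurable_cong_sets[OF sets refl])
    show "AE t in \<nu>. indicator {0..<1} t *\<^sub>R ((1 / (1 - t)) *\<^sub>R f (t / (1 - t)))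
        = halfline_test f (clamp 0 1 t)"
      using supp by eventually_elim (auto simp: clamp01_cancel halfline_test_def)
  qed
  finally show ?thesis ..
qed

lemma vague_convergence_halfline_transfer:
  assumes \<sigma>: "\<And>n. pos_measure_halfline (\<sigma>s n)"
    and sets: "sets \<nu> = sets borel" and supp: "AE t in \<nu>. t \<in> {0..1}"
    and conv: "\<And>h :: real \<Rightarrow> real. continuous_on {0..1} h \<Longrightarrow>
      (\<lambda>n. \<integral>t. h (clamp 0 1 t) \<partial>unit_transfer (\<sigma>s n)) \<longlonglongrightarrow> (\<integral>t. h (clamp 0 1 t) \<partial>\<nu>)"
  shows "vague_convergence \<sigma>s (halfline_transfer \<nu>)"
  unfolding vague_convergence_def
proof (intro allI impI, elim conjE exE)
  fix f :: "real \<Rightarrow> real" and K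
  assume f: "continuous_on {0..} f" and K: "compact K" "K \<subseteq> {0..}" "\<forall>x\<in>{0..} - K. f x = 0"
  \<comment> \<open>Extended constantly to the left, f becomes Borel measurable on the whole line.\<close>
  define g where "g x = f (max 0 x)" for x
  have "continuous_on UNIV g"
    unfolding g_def by (rule continuous_on_compose2[OF f]) (auto intro: continuous_intros)
  then have g: "g \<in> borel_measurable borel"
    by (rule borel_measurable_continuous_onI)
  have "halfline_test g t = halfline_test f t" if "t \<in> {0..1}" for t
    using that by (simp add: halfline_test_def g_def)
  then have h: "continuous_on {0..1} (halfline_test g)"
    using continuous_on_halfline_test[OF f K] continuous_on_eq by metis
  have "(\<lambda>n. \<integral>x. g x \<partial>\<sigma>s n) \<longlonglongrightarrow> (\<integral>x. g x \<partial>halfline_transfer \<nu>)"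
    using conv[OF h]
    by (simp add: integral_halfline_test_unit_transfer[OF \<sigma> h]
        integral_halfline_test_halfline_transfer[OF sets supp g h])
  moreover have "(\<integral>x. g x \<partial>\<sigma>s n) = (\<integral>x. f x \<partial>\<sigma>s n)" for n
    using space_pos_measure_halfline[OF \<sigma>] by (intro Bochner_Integration.integral_cong) (auto simp: g_def)
  moreover have "(\<integral>x. g x \<partial>halfline_transfer \<nu>) = (\<integral>x. f x \<partial>halfline_transfer \<nu>)"
    by (intro Bochner_Integration.integral_cong)
      (auto simp: g_def halfline_transfer_def space_restrict_space)
  ultimately show "(\<lambda>n. \<integral>x. f x \<partial>\<sigma>s n) \<longlonglongrightarrow> (\<integral>x. f x \<partial>halfline_transfer \<nu>)"
    by simp
qed

section \<open>Helly selection for measures on the unit interval\<close>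

text \<open>Helly's theorem is stated for probability measures; the zero measure is sent to a Dirac
  mass, which is harmless since it is scaled back by the total mass 0.\<close>

definition normalized_measure :: "real measure \<Rightarrow> real measure" where
  "normalized_measure L = (if measure L UNIV = 0 then return borel 0
     else density L (\<lambda>_. ennreal (1 / measure L UNIV)))"

lemma real_distribution_normalized_measure:
  assumes fin: "finite_measure L" and sets: "sets L = sets borel"
  shows "real_distribution (normalized_measure L)"
proof (cases "measure L UNIV = 0")
  case True
  then show ?thesis
    by (simp add: normalized_measure_def real_distribution_def real_distribution_axioms_def
        prob_space_return)
next
  case False
  then have m: "measure L UNIV > 0"
    using measure_nonneg[of L UNIV] by linarith
  have "emeasure L UNIV = ennreal (measure L UNIV)"
    using finite_measure.emeasure_eq_measure[OF fin] by simp
  then have "emeasure (density L (\<lambda>_. ennreal (1 / measure L UNIV))) UNIV = 1"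
    using m sets_eq_imp_space_eq[OF sets]
    by (simp add: emeasure_density_const sets ennreal_mult[symmetric])
  then have "prob_space (density L (\<lambda>_. ennreal (1 / measure L UNIV)))"
    using sets_eq_imp_space_eq[OF sets] by (intro prob_spaceI) simp
  then show ?thesis
    using False by (simp add: normalized_measure_def real_distribution_def real_distribution_axioms_def sets)
qed

lemma AE_normalized_measure:
  assumes "AE t in L. t \<in> A" "A \<in> sets borel" "0 \<in> A"
  shows "AE t in normalized_measure L. t \<in> A"
proof (cases "measure L UNIV = 0")
  case True
  then have P: "normalized_measure L = return borel 0"
    by (simp add: normalized_measure_def)
  show ?thesis
    unfolding P using assms(2,3) by (simp add: AE_return)
next
  case False
  then have P: "normalized_measure L = density L (\<lambda>_. ennreal (1 / measure L UNIV))"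
    by (simp add: normalized_measure_def)
  show ?thesis
    unfolding P using assms(1) by (simp add: AE_density eventually_mono)
qed

lemma integral_normalized_measure:
  fixes f :: "real \<Rightarrow> 'b::{banach, second_countable_topology}"
  assumes fin: "finite_measure L" and sets: "sets L = sets borel" and f: "f \<in> borel_measurable borel"
  shows "(\<integral>t. f t \<partial>L) = measure L UNIV *\<^sub>R (\<integral>t. f t \<partial>normalized_measure L)"
proof (cases "measure L UNIV = 0")
  case True
  then have "emeasure L (space L) = 0"
    using finite_measure.emeasure_eq_measure[OF fin] sets_eq_imp_space_eq[OF sets] by simp
  then have "(\<integral>t. f t \<partial>L) = 0"
    by (intro integral_eq_zero_AE emeasure_0_AE)
  then show ?thesis
    using True by simp
next
  case False
  then have "measure L UNIV > 0"
    using measure_nonneg[of L UNIV] by linarith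
  moreover have "f \<in> borel_measurable L"
    using f by (simp add: measurable_cong_sets[OF sets refl])
  ultimately show ?thesis
    using False by (simp add: normalized_measure_def integral_density)
qed

lemma weakly_convergent_subsequence_unit_measures:
  assumes fin: "\<And>n. finite_measure (N n)" and sets: "\<And>n. sets (N n) = sets borel"
    and supp: "\<And>n. AE t in N n. t \<in> {0..1}"
    and mass: "(\<lambda>n. measure (N n) UNIV) \<longlonglongrightarrow> m"
  obtains r \<nu> where "strict_mono r" "finite_measure \<nu>" "sets \<nu> = sets borel"
    "measure \<nu> UNIV = m"
    "\<And>(f :: real \<Rightarrow> complex) C. (\<And>x. isCont f x) \<Longrightarrow> (\<And>x. norm (f x) \<le> C) \<Longrightarrow>
       (\<lambda>n. \<integral>t. f t \<partial>N (r n)) \<longlonglongrightarrow> (\<integral>t. f t \<partial>\<nu>)"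
proof -
  define P where "P n = normalized_measure (N n)" for n
  have P: "real_distribution (P n)" for n
    unfolding P_def by (rule real_distribution_normalized_measure[OF fin sets])
  have "measure (P n) {-1<..2} = 1" for n
  proof -
    interpret real_distribution "P n"
      by (rule P)
    have "AE t in N n. t \<in> {-1<..2}"
      using supp[of n] by eventually_elim auto
    then have "AE t in P n. t \<in> {-1<..2}"
      unfolding P_def by (rule AE_normalized_measure) auto
    then show ?thesis
      by (subst prob_eq_1) simp_all
  qed
  then have "tight P"
    unfolding tight_def using P by (intro conjI allI impI exI[of _ "-1"] exI[of _ 2]) auto
  then obtain r P_lim where r: "strict_mono r" and P_lim: "real_distribution P_lim"
    and weak: "weak_conv_m (P \<circ> r) P_lim"
    using tight_imp_convergent_subsubsequence[of P id] by (auto simp: strict_mono_def)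
  have "m \<ge> 0"
    by (rule LIMSEQ_le_const[OF mass]) simp
  define \<nu> where "\<nu> = density P_lim (\<lambda>_. ennreal m)"
  interpret P_lim: real_distribution P_lim
    by (rule P_lim)
  have sets_\<nu>: "sets \<nu> = sets borel"
    by (simp add: \<nu>_def)
  have emeasure_\<nu>: "emeasure \<nu> UNIV = ennreal m"
    using P_lim.emeasure_space_1 by (simp add: \<nu>_def emeasure_density_const)
  then have "finite_measure \<nu>"
    using sets_eq_imp_space_eq[OF sets_\<nu>] by (intro finite_measureI) simp
  moreover have "measure \<nu> UNIV = m"
    using emeasure_\<nu> \<open>m \<ge> 0\<close> by (simp add: measure_def)
  moreover have "(\<lambda>n. \<integral>t. f t \<partial>N (r n)) \<longlonglongrightarrow> (\<integral>t. f t \<partial>\<nu>)"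
    if cont: "\<And>x. isCont f x" and bound: "\<And>x. norm (f x) \<le> C" for f :: "real \<Rightarrow> complex" and C
  proof -
    have f: "f \<in> borel_measurable borel"
      using cont by (intro borel_measurable_continuous_onI continuous_at_imp_continuous_on) auto
    have "(\<lambda>n. measure (N (r n)) UNIV *\<^sub>R (\<integral>t. f t \<partial>P (r n))) \<longlonglongrightarrow> m *\<^sub>R (\<integral>t. f t \<partial>P_lim)"
      using LIMSEQ_subseq_LIMSEQ[OF mass r] weak_conv_imp_integral_bdd_continuous_conv[of "P \<circ> r" P_lim f C]
        P P_lim weak cont bound
      by (intro tendsto_scaleR) (auto simp: o_def)
    moreover have "(\<integral>t. f t \<partial>\<nu>) = m *\<^sub>R (\<integral>t. f t \<partial>P_lim)"
      using f \<open>m \<ge> 0\<close> by (simp add: \<nu>_def integral_density)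
    ultimately show ?thesis
      by (simp add: P_def integral_normalized_measure[OF fin sets f])
  qed
  ultimately show ?thesis
    using that r sets_\<nu> by blast
qed

lemma AE_unit_interval_weak_limit:
  assumes fin: "finite_measure \<nu>" and sets: "sets \<nu> = sets borel"
    and supp: "\<And>n. AE t in N n. t \<in> {0..1}"
    and conv: "\<And>f :: real \<Rightarrow> complex. (\<And>x. isCont f x) \<Longrightarrow> (\<And>x. norm (f x) \<le> 1) \<Longrightarrow>
       (\<lambda>n. \<integral>t. f t \<partial>N n) \<longlonglongrightarrow> (\<integral>t. f t \<partial>\<nu>)"
  shows "AE t in \<nu>. t \<in> {0..1}"
proof -
  define g where "g t = min 1 \<bar>t - clamp 0 1 t\<bar>" for t :: real
  have g_cont: "isCont g x" for x
    unfolding g_def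
    by (intro continuous_intros isCont_clamp01_comp[where f = id, simplified])
  have "isCont (\<lambda>t. complex_of_real (g t)) x" for x
    by (intro continuous_intros g_cont)
  moreover have "norm (complex_of_real (g t)) \<le> 1" for t
    by (simp add: g_def)
  ultimately have "(\<lambda>n. \<integral>t. complex_of_real (g t) \<partial>N n) \<longlonglongrightarrow> (\<integral>t. complex_of_real (g t) \<partial>\<nu>)"
    by (rule conv)
  moreover have "(\<integral>t. complex_of_real (g t) \<partial>N n) = 0" for n
    using supp[of n] by (intro integral_eq_zero_AE) (auto elim: eventually_mono simp: g_def clamp01_cancel)
  ultimately have "(\<integral>t. g t \<partial>\<nu>) = 0"
    using LIMSEQ_unique[OF tendsto_const] by fastforce
  moreover have "integrable \<nu> g"
    using g_cont by (intro finite_measure.integrable_const_bound[OF fin, of _ 1])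
      (auto simp: g_def measurable_cong_sets[OF sets refl]
        intro: borel_measurable_continuous_onI continuous_at_imp_continuous_on)
  ultimately have "AE t in \<nu>. g t = 0"
    by (subst (asm) integral_nonneg_eq_0_iff_AE) (auto simp: g_def)
  then show ?thesis
  proof eventually_elim
    fix t assume "g t = 0"
    then have "t = clamp 0 1 t"
      by (simp add: g_def min_def split: if_splits)
    then show "t \<in> {0..1}"
      using clamp01_in by metis
  qed
qed

section \<open>Limits of Stieltjes transforms\<close>

lemma Re_pos_in_cut_plane: "Re z > 0 \<Longrightarrow> z \<in> cut_plane"
  by (auto simp: cut_plane_def)

lemma (in unit_interval_measures) integrals_converge_resolvent_if_kernel:
  assumes kernel: "\<And>x. x > 0 \<Longrightarrow> integrals_converge (stieltjes_kernel (complex_of_real x))"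
    and w: "\<bar>w\<bar> < 1/2"
  shows "integrals_converge (\<lambda>t. 1 / (1 + w * t))"
proof -
  define x where "x = 1 / (1 + w)"
  have "1 + w > 0" "x > 0"
    using w by (auto simp: x_def)
  have "1 / (1 + w * t) = x * Re (stieltjes_kernel (complex_of_real x) t)" if "t \<in> {0..1}" for t
  proof -
    have "\<bar>w * t\<bar> \<le> \<bar>w\<bar>"
      using that by (auto simp: abs_mult intro: mult_left_le)
    then have "1 + w * t > 0"
      using w by linarith
    have "stieltjes_kernel (complex_of_real x) t = complex_of_real (1 / (t + x * (1 - t)))"
      by (simp add: stieltjes_kernel_def)
    moreover have "t + x * (1 - t) = (1 + w * t) / (1 + w)"
      using \<open>1 + w > 0\<close> by (simp add: x_def field_simps)
    ultimately show ?thesis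
      using \<open>1 + w > 0\<close> \<open>1 + w * t > 0\<close> by (simp add: x_def)
  qed
  moreover have "integrals_converge (\<lambda>t. x * Re (stieltjes_kernel (complex_of_real x) t))"
    using \<open>x > 0\<close>
    by (intro integrals_converge_cmult integrals_converge_Re kernel
        continuous_on_stieltjes_kernel_right Re_pos_in_cut_plane) simp_all
  ultimately show ?thesis
    by (subst integrals_converge_cong) auto
qed

lemma (in unit_interval_measures) uniform_limit_stieltjes_kernel:
  assumes supp: "AE t in M. t \<in> {0..1}"
    and conv: "\<And>F :: real \<Rightarrow> complex. continuous_on {0..1} F \<Longrightarrow> integrals_converge F"
    and K: "compact K" "K \<subseteq> cut_plane"
  shows "uniform_limit K (\<lambda>n z. \<integral>t. stieltjes_kernel z (clamp 0 1 t) \<partial>N n)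
           (\<lambda>z. complex_of_real (measure M {1}) + stieltjes_int (halfline_transfer M) z) sequentially"
proof -
  have "uniform_limit K (\<lambda>n z. \<integral>t. stieltjes_kernel z (clamp 0 1 t) \<partial>N n)
      (\<lambda>z. \<integral>t. stieltjes_kernel z (clamp 0 1 t) \<partial>M) sequentially"
    using K by (intro uniform_limit_integrals continuous_on_stieltjes_kernel conv
        continuous_on_stieltjes_kernel_right) auto
  then show ?thesis
    using K(2) integral_stieltjes_kernel_split[OF sets_M finite_M supp]
    by (subst uniform_limit_cong'[where X = K]) auto
qed

lemma unit_limit_measure_of_stieltjes:
  assumes adm: "\<And>n. stieltjes_admissible (\<sigma>s n)"
    and lim: "\<And>z. Re z > 0 \<Longrightarrow> (\<lambda>n. stieltjes_int (\<sigma>s n) z) \<longlonglongrightarrow> \<phi> z"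
  obtains \<nu> where "unit_interval_measures (\<lambda>n. unit_transfer (\<sigma>s n)) \<nu>" "AE t in \<nu>. t \<in> {0..1}"
    "\<And>z. Re z > 0 \<Longrightarrow> \<phi> z = (\<integral>t. stieltjes_kernel z (clamp 0 1 t) \<partial>\<nu>)"
proof -
  define N where "N n = unit_transfer (\<sigma>s n)" for n
  have \<sigma>: "pos_measure_halfline (\<sigma>s n)" for n
    using adm by (simp add: stieltjes_admissible_def)
  have fin: "finite_measure (N n)" for n
    by (simp add: N_def finite_measure_unit_transfer adm)
  have sets: "sets (N n) = sets borel" for n
    by (simp add: N_def)
  have supp: "AE t in N n. t \<in> {0..1}" for n
    unfolding N_def by (rule AE_unit_transfer[OF \<sigma>])
  have transform: "stieltjes_int (\<sigma>s n) z = (\<integral>t. stieltjes_kernel z (clamp 0 1 t) \<partial>N n)" for n z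
    by (simp add: N_def stieltjes_int_unit_transfer[OF \<sigma>])
  have mass: "(\<lambda>n. measure (N n) UNIV) \<longlonglongrightarrow> Re (\<phi> 1)"
    using tendsto_Re[OF lim[of 1]] by (simp add: transform N_def)
  obtain r \<nu> where r: "strict_mono r" and \<nu>: "finite_measure \<nu>" "sets \<nu> = sets borel"
    and mass_\<nu>: "measure \<nu> UNIV = Re (\<phi> 1)"
    and conv: "\<And>(f :: real \<Rightarrow> complex) C. (\<And>x. isCont f x) \<Longrightarrow> (\<And>x. norm (f x) \<le> C) \<Longrightarrow>
       (\<lambda>n. \<integral>t. f t \<partial>N (r n)) \<longlonglongrightarrow> (\<integral>t. f t \<partial>\<nu>)"
    using weakly_convergent_subsequence_unit_measures[OF fin sets supp mass] by blast
  have "unit_interval_measures N \<nu>"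
    by (rule unit_interval_measures.intro[OF fin \<nu>(1) sets \<nu>(2)]) (simp add: mass mass_\<nu>)
  moreover have "AE t in \<nu>. t \<in> {0..1}"
    using \<nu> supp conv by (rule AE_unit_interval_weak_limit)
  moreover have "\<phi> z = (\<integral>t. stieltjes_kernel z (clamp 0 1 t) \<partial>\<nu>)" if "Re z > 0" for z
  proof -
    note kernel = continuous_on_stieltjes_kernel_right[OF Re_pos_in_cut_plane[OF that]]
    obtain C where "\<And>t. norm (stieltjes_kernel z (clamp 0 1 t)) \<le> C"
      using bounded_clamp01_comp[OF kernel] by blast
    then have "(\<lambda>n. \<integral>t. stieltjes_kernel z (clamp 0 1 t) \<partial>N (r n))
        \<longlonglongrightarrow> (\<integral>t. stieltjes_kernel z (clamp 0 1 t) \<partial>\<nu>)"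
      by (rule conv[OF isCont_clamp01_comp[OF kernel]])
    moreover have "(\<lambda>n. \<integral>t. stieltjes_kernel z (clamp 0 1 t) \<partial>N (r n)) \<longlonglongrightarrow> \<phi> z"
      using LIMSEQ_subseq_LIMSEQ[OF lim[OF that] r] by (simp add: o_def transform)
    ultimately show ?thesis
      by (rule LIMSEQ_unique[rotated])
  qed
  ultimately show ?thesis
    using that unfolding N_def by blast
qed

theorem lemma2p7:
  fixes \<sigma>s :: "nat \<Rightarrow> real measure" and \<phi> :: "complex \<Rightarrow> complex"
  assumes adm: "\<And>n. stieltjes_admissible (\<sigma>s n)"
    and hol: "\<phi> holomorphic_on {z. Re z > 0}"
    and conv: "\<And>K. compact K \<Longrightarrow> K \<subseteq> {z. Re z > 0} \<Longrightarrow>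
                 uniform_limit K (\<lambda>n z. stieltjes_int (\<sigma>s n) z) \<phi> sequentially"
  shows "\<exists>(a::real) \<sigma>. a \<ge> 0 \<and> stieltjes_admissible \<sigma> \<and>
           (\<forall>z. Re z > 0 \<longrightarrow> \<phi> z = complex_of_real a + stieltjes_int \<sigma> z) \<and>
           vague_convergence \<sigma>s \<sigma> \<and>
           (\<forall>K. compact K \<and> K \<subseteq> cut_plane \<longrightarrow>
              uniform_limit K (\<lambda>n z. stieltjes_int (\<sigma>s n) z)
                (\<lambda>z. complex_of_real a + stieltjes_int \<sigma> z) sequentially)"
proof -
  have \<sigma>: "pos_measure_halfline (\<sigma>s n)" for n
    using adm by (simp add: stieltjes_admissible_def)
  have lim: "(\<lambda>n. stieltjes_int (\<sigma>s n) z) \<longlonglongrightarrow> \<phi> z" if "Re z > 0" for z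
    using tendsto_uniform_limitI[OF conv[of "{z}"]] that by simp
  obtain \<nu> where limit: "unit_interval_measures (\<lambda>n. unit_transfer (\<sigma>s n)) \<nu>"
    and supp: "AE t in \<nu>. t \<in> {0..1}"
    and rep: "\<And>z. Re z > 0 \<Longrightarrow> \<phi> z = (\<integral>t. stieltjes_kernel z (clamp 0 1 t) \<partial>\<nu>)"
    using unit_limit_measure_of_stieltjes[OF adm lim] by blast
  interpret unit_interval_measures "\<lambda>n. unit_transfer (\<sigma>s n)" \<nu>
    by (fact limit)
  have "integrals_converge (stieltjes_kernel (complex_of_real x))" if "x > 0" for x
    using lim[of x] rep[of x] that
    by (simp add: integrals_converge_def stieltjes_int_unit_transfer[OF \<sigma>])
  note resolvent = integrals_converge_resolvent_if_kernel[OF this]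
  show ?thesis
  proof (intro exI[of _ "measure \<nu> {1}"] exI[of _ "halfline_transfer \<nu>"] conjI allI impI)
    show "stieltjes_admissible (halfline_transfer \<nu>)"
      by (rule stieltjes_admissible_halfline_transfer[OF sets_M finite_M])
    show "\<phi> z = complex_of_real (measure \<nu> {1}) + stieltjes_int (halfline_transfer \<nu>) z"
      if "Re z > 0" for z
      using rep[OF that] integral_stieltjes_kernel_split[OF sets_M finite_M supp Re_pos_in_cut_plane[OF that]]
      by simp
    show "vague_convergence \<sigma>s (halfline_transfer \<nu>)"
      using integrals_converge_continuous[OF resolvent]
      by (intro vague_convergence_halfline_transfer[OF \<sigma> sets_M supp]) (simp add: integrals_converge_def)
    show "uniform_limit K (\<lambda>n z. stieltjes_int (\<sigma>s n) z)
        (\<lambda>z. complex_of_real (measure \<nu> {1}) + stieltjes_int (halfline_transfer \<nu>) z) sequentially"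
      if "compact K \<and> K \<subseteq> cut_plane" for K
      unfolding stieltjes_int_unit_transfer[OF \<sigma>] using that
      by (intro uniform_limit_stieltjes_kernel[OF supp integrals_converge_continuous_complex[OF resolvent]])
        auto
  qed simp
qed

end
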